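(* Let $\Gamma_H$ be the H-junction tree with edges $e_1,\dots,e_5$ of propagation times $t_1,\dots,t_5$, linearly independent over $\mathbb{Q}$, where the two interior vertices are $A$ (incident to $e_1,e_2,e_3$) and $B$ (incident to $e_3,e_4,e_5$). Then there is a constant $C$ independent of $T$ such that for all $T\ge 0$ $$N(\Gamma_H, A, A, T) = \#[2n_1t_1 + 2n_3t_3 + 2n_4t_4 + 2n_5t_5 \le T] + \#[2n_2t_2 + 2n_3t_3 + 2n_4t_4 + 2n_5t_5 \le T] - \#[2n_1t_1 + 2n_4t_4 + 2n_5t_5 \le T] - \#[2n_2t_2 + 2n_4t_4 + 2n_5t_5 \le T] + \#[2n_1t_1 + 2n_2t_2 \le T] + \#[2n_1t_1 \le T] + \#[2n_2t_2 \le T] + C.$$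
   Context: $\Gamma_H$ has six vertices: $A$, $B$, and the four distinct valence-one endpoints of $e_1,e_2,e_4,e_5$ other than $A$, $B$; $e_3$ joins $A$ and $B$. Dynamics: each edge $e_i$ is traversed in time $t_i$; at time $0$ the process starts at $A$ (a point departs from $A$ along each incident edge); at a valence-one vertex a point is reflected; if $k$ points arrive simultaneously at an interior vertex of valence $v$, then $v$ points leave it, one along each incident edge, and $v-k$ new points are said to be born there. $N(\Gamma,A,X,T)$ is the total number of new points born at vertex $X$ up to the moment $T$ when the process starts at $A$. $\#[\text{inequality}]$ denotes the number of tuples of nonnegative integers $n_i$ satisfying the inequality. *)

theory Defs
  imports Complex_Main
begin

definition incident :: "('e \<Rightarrow> 'v \<times> 'v) \<Rightarrow> 'v \<Rightarrow> 'e \<Rightarrow> bool" where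
  "incident ends X e \<longleftrightarrow> X = fst (ends e) \<or> X = snd (ends e)"

definition other_end :: "('e \<Rightarrow> 'v \<times> 'v) \<Rightarrow> 'v \<Rightarrow> 'e \<Rightarrow> 'v" where
  "other_end ends X e = (if X = fst (ends e) then snd (ends e) else fst (ends e))"

definition valence :: "('e \<Rightarrow> 'v \<times> 'v) \<Rightarrow> 'v \<Rightarrow> nat" where
  "valence ends X = card {e. incident ends X e}"

text \<open>departs ends tm X0 X e s: in the process started at X0 at time 0, a point
  leaves vertex X along edge e at time s.  Points arriving (simultaneously) at a
  vertex cause one point to leave along each incident edge; at a valence-one
  vertex this is the reflection.\<close>

inductive departs :: "('e \<Rightarrow> 'v \<times> 'v) \<Rightarrow> ('e \<Rightarrow> real) \<Rightarrow> 'v \<Rightarrow> 'v \<Rightarrow> 'e \<Rightarrow> real \<Rightarrow> bool"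
  for ends tm X0 where
  start: "incident ends X0 e \<Longrightarrow> departs ends tm X0 X0 e 0"
| step: "departs ends tm X0 X e s \<Longrightarrow> incident ends (other_end ends X e) e' \<Longrightarrow>
           departs ends tm X0 (other_end ends X e) e' (s + tm e)"

definition arrives :: "('e \<Rightarrow> 'v \<times> 'v) \<Rightarrow> ('e \<Rightarrow> real) \<Rightarrow> 'v \<Rightarrow> 'v \<Rightarrow> 'e \<Rightarrow> real \<Rightarrow> bool" where
  "arrives ends tm X0 Y e s \<longleftrightarrow>
     (\<exists>X. departs ends tm X0 X e (s - tm e) \<and> other_end ends X e = Y)"

definition born_at :: "('e \<Rightarrow> 'v \<times> 'v) \<Rightarrow> ('e \<Rightarrow> real) \<Rightarrow> 'v \<Rightarrow> 'v \<Rightarrow> real \<Rightarrow> nat" where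
  "born_at ends tm X0 X s =
     valence ends X - card {e. incident ends X e \<and> arrives ends tm X0 X e s}"

text \<open>N(Gamma, X0, X, T): total number of new points born at X up to time T.\<close>
definition Nborn :: "('e \<Rightarrow> 'v \<times> 'v) \<Rightarrow> ('e \<Rightarrow> real) \<Rightarrow> 'v \<Rightarrow> 'v \<Rightarrow> real \<Rightarrow> nat" where
  "Nborn ends tm X0 X T =
     (\<Sum>s \<in> {s. s \<le> T \<and> (\<exists>e. departs ends tm X0 X e s)}. born_at ends tm X0 X s)"

datatype hvert = A | B | P1 | P2 | P4 | P5
datatype hedge = E1 | E2 | E3 | E4 | E5

fun H_ends :: "hedge \<Rightarrow> hvert \<times> hvert" where
  "H_ends E1 = (A, P1)"
| "H_ends E2 = (A, P2)"
| "H_ends E3 = (A, B)"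
| "H_ends E4 = (B, P4)"
| "H_ends E5 = (B, P5)"

fun H_time :: "real \<Rightarrow> real \<Rightarrow> real \<Rightarrow> real \<Rightarrow> real \<Rightarrow> hedge \<Rightarrow> real" where
  "H_time t1 t2 t3 t4 t5 E1 = t1"
| "H_time t1 t2 t3 t4 t5 E2 = t2"
| "H_time t1 t2 t3 t4 t5 E3 = t3"
| "H_time t1 t2 t3 t4 t5 E4 = t4"
| "H_time t1 t2 t3 t4 t5 E5 = t5"

end

theory Submission
  imports Defs
begin

text \<open>Points leave A exactly at the times \<open>2 n\<^sub>1 t\<^sub>1 + \<dots> + 2 n\<^sub>5 t\<^sub>5\<close> with
  \<open>n\<^sub>3 = 0 \<longrightarrow> n\<^sub>4 = n\<^sub>5 = 0\<close> (the edges e4, e5 can only be travelled after crossing e3),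
  and points leave B at \<open>t\<^sub>3\<close> plus any sum of that form, without the constraint.  By rational independence every time has
  a unique representation, and a point arrives at A along e1, e2, e3 at such a time iff
  \<open>n\<^sub>1\<close>, \<open>n\<^sub>2\<close>, \<open>n\<^sub>3\<close> respectively is nonzero.  Hence
  \<open>[n\<^sub>1 = 0] + [n\<^sub>2 = 0] + [n\<^sub>3 = 0]\<close> points are born, and summing these indicators and
  removing the forbidden tuples by inclusion-exclusion gives the formula, with \<open>C = 0\<close>.\<close>

lemma incident_other_end: "incident ends (other_end ends X e) e"
  by (simp add: incident_def other_end_def)

lemma other_end_other_end: "incident ends X e \<Longrightarrow> other_end ends (other_end ends X e) e = X"
  by (auto simp: incident_def other_end_def)

lemma departs_incident: "departs ends tm X0 X e s \<Longrightarrow> incident ends X e"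
  by (induction rule: departs.induct) auto

lemma departs_other_edge:
  "departs ends tm X0 X e s \<Longrightarrow> incident ends X e' \<Longrightarrow> departs ends tm X0 X e' s"
  by (cases rule: departs.cases) (auto intro: departs.intros)

lemma departs_along:
  "departs ends tm X0 X e s \<Longrightarrow> other_end ends X e = Y \<Longrightarrow> incident ends Y e' \<Longrightarrow>
    departs ends tm X0 Y e' (s + tm e)"
  by (metis departs.step)

lemma departs_round_trips:
  assumes "departs ends tm X0 X e s" "incident ends X f"
  shows "departs ends tm X0 X e (s + 2 * real n * tm f)"
proof (induction n)
  case 0
  then show ?case using assms(1) by simp
next
  case (Suc n)
  let ?s = "s + 2 * real n * tm f"
  have "departs ends tm X0 X f ?s"
    using Suc assms(2) by (rule departs_other_edge)
  then have "departs ends tm X0 (other_end ends X f) f (?s + tm f)"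
    using incident_other_end by (rule departs.step)
  then have "departs ends tm X0 X e (?s + tm f + tm f)"
    by (rule departs_along[OF _ other_end_other_end[OF assms(2)] departs_incident[OF assms(1)]])
  then show ?case by (simp add: algebra_simps)
qed

lemma arrives_iff_departs_other_end:
  assumes "incident ends Y e"
  shows "arrives ends tm X0 Y e s \<longleftrightarrow> departs ends tm X0 (other_end ends Y e) e (s - tm e)"
  using assms departs_incident other_end_other_end
  unfolding arrives_def by metis

lemma card_Diff_Diff:
  assumes "finite F" "H \<subseteq> G" "G \<subseteq> F"
  shows "int (card (F - (G - H))) = int (card F) - int (card G) + int (card H)"
proof -
  have fin: "finite G" "finite H"
    using finite_subset[OF assms(3,1)] finite_subset[OF assms(2)] by blast+
  have "card (G - H) = card G - card H" "card H \<le> card G"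
    using fin assms(2) by (simp_all add: card_Diff_subset card_mono)
  moreover have "G - H \<subseteq> F" using assms(3) by blast
  then have "card (F - (G - H)) = card F - card (G - H)" "card (G - H) \<le> card F"
    using fin assms(1) by (simp_all only: card_Diff_subset card_mono finite_Diff)
  ultimately show ?thesis by simp
qed

lemma card_admissible_counts:
  fixes u v w z T :: real
  assumes fin: "finite {(m, c, d, e). 2 * real m * u + 2 * real c * v + 2 * real d * w + 2 * real e * z \<le> T}"
  shows "int (card {(m, c, d, e). 2 * real m * u + 2 * real c * v + 2 * real d * w + 2 * real e * z \<le> T
                      \<and> (c = 0 \<longrightarrow> d = 0 \<and> e = 0)})
       = int (card {(m, c, d, e). 2 * real m * u + 2 * real c * v + 2 * real d * w + 2 * real e * z \<le> T})
       - int (card {(m, d, e). 2 * real m * u + 2 * real d * w + 2 * real e * z \<le> T})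
       + int (card {m. 2 * real m * u \<le> T})"
proof -
  let ?F = "{(m, c, d, e). 2 * real m * u + 2 * real c * v + 2 * real d * w + 2 * real e * z \<le> T}"
  let ?G = "(\<lambda>(m, d, e). (m, 0, d, e)) ` {(m, d, e). 2 * real m * u + 2 * real d * w + 2 * real e * z \<le> T}"
  let ?H = "(\<lambda>m. (m, 0, 0, 0)) ` {m. 2 * real m * u \<le> T}"
  have split: "{(m, c, d, e). 2 * real m * u + 2 * real c * v + 2 * real d * w + 2 * real e * z \<le> T
                 \<and> (c = 0 \<longrightarrow> d = 0 \<and> e = 0)} = ?F - (?G - ?H)"
    by (auto simp: image_iff)
  have sub: "?H \<subseteq> ?G" "?G \<subseteq> ?F" by (auto simp: image_iff)
  have card_G: "card ?G = card {(m, d, e). 2 * real m * u + 2 * real d * w + 2 * real e * z \<le> T}"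
    by (rule card_image) (auto simp: inj_on_def)
  have card_H: "card ?H = card {m. 2 * real m * u \<le> T}"
    by (rule card_image) (auto simp: inj_on_def)
  show ?thesis
    unfolding split card_Diff_Diff[OF fin sub] card_G card_H ..
qed

lemma le_nat_ceiling_divide:
  fixes x t :: real
  assumes "0 < t" "real k * t \<le> x"
  shows "k \<le> nat \<lceil>x / t\<rceil>"
proof -
  have "real k \<le> x / t" using assms by (simp add: pos_le_divide_eq)
  then show ?thesis by linarith
qed

lemma incident_H_iff: "incident H_ends X e \<longleftrightarrow>
  (X = A \<and> (e = E1 \<or> e = E2 \<or> e = E3)) \<or> (X = B \<and> (e = E3 \<or> e = E4 \<or> e = E5)) \<or>
  (X = P1 \<and> e = E1) \<or> (X = P2 \<and> e = E2) \<or> (X = P4 \<and> e = E4) \<or> (X = P5 \<and> e = E5)"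
  by (cases e; cases X; simp add: incident_def)

lemma other_end_H [simp]:
  "other_end H_ends A E1 = P1" "other_end H_ends P1 E1 = A"
  "other_end H_ends A E2 = P2" "other_end H_ends P2 E2 = A"
  "other_end H_ends A E3 = B" "other_end H_ends B E3 = A"
  "other_end H_ends B E4 = P4" "other_end H_ends P4 E4 = B"
  "other_end H_ends B E5 = P5" "other_end H_ends P5 E5 = B"
  by (simp_all add: other_end_def)

locale H_junction =
  fixes t1 t2 t3 t4 t5 :: real
  assumes pos: "t1 > 0" "t2 > 0" "t3 > 0" "t4 > 0" "t5 > 0"
    and lin_indep: "\<And>q1 q2 q3 q4 q5 :: rat.
        of_rat q1 * t1 + of_rat q2 * t2 + of_rat q3 * t3 + of_rat q4 * t4 + of_rat q5 * t5 = 0 \<Longrightarrow>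
        q1 = 0 \<and> q2 = 0 \<and> q3 = 0 \<and> q4 = 0 \<and> q5 = 0"
begin

abbreviation "tm \<equiv> H_time t1 t2 t3 t4 t5"
abbreviation "dep \<equiv> departs H_ends tm A"

definition round_trips :: "nat \<times> nat \<times> nat \<times> nat \<times> nat \<Rightarrow> real" where
  "round_trips = (\<lambda>(a, b, c, d, e). 2*real a*t1 + 2*real b*t2 + 2*real c*t3 + 2*real d*t4 + 2*real e*t5)"

lemma round_trips_Suc:
  "round_trips (Suc a, b, c, d, e) = round_trips (a, b, c, d, e) + 2 * t1"
  "round_trips (a, Suc b, c, d, e) = round_trips (a, b, c, d, e) + 2 * t2"
  "round_trips (a, b, Suc c, d, e) = round_trips (a, b, c, d, e) + 2 * t3"
  "round_trips (a, b, c, Suc d, e) = round_trips (a, b, c, d, e) + 2 * t4"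
  "round_trips (a, b, c, d, Suc e) = round_trips (a, b, c, d, e) + 2 * t5"
  by (simp_all add: round_trips_def algebra_simps)

lemma inj_round_trips: "inj round_trips"
proof (rule injI)
  fix m n :: "nat \<times> nat \<times> nat \<times> nat \<times> nat"
  assume eq: "round_trips m = round_trips n"
  obtain a b c d e a' b' c' d' e' where mn: "m = (a, b, c, d, e)" "n = (a', b', c', d', e')"
    by (metis prod.exhaust)
  let ?q = "\<lambda>x y. (of_nat x - of_nat y :: rat)"
  have "of_rat (?q a a') * t1 + of_rat (?q b b') * t2 + of_rat (?q c c') * t3
      + of_rat (?q d d') * t4 + of_rat (?q e e') * t5 = 0"
    using eq by (simp add: mn of_rat_diff round_trips_def algebra_simps)
  from lin_indep[OF this] show "m = n" by (simp add: mn)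
qed

definition A_time :: "real \<Rightarrow> bool" where
  "A_time s \<longleftrightarrow> (\<exists>a b c d e. s = round_trips (a, b, c, d, e) \<and> (c = 0 \<longrightarrow> d = 0 \<and> e = 0))"

definition B_time :: "real \<Rightarrow> bool" where
  "B_time s \<longleftrightarrow> (\<exists>a b c d e. s = t3 + round_trips (a, b, c, d, e))"

fun departure_time :: "hvert \<Rightarrow> real \<Rightarrow> bool" where
  "departure_time A s = A_time s"
| "departure_time P1 s = A_time (s - t1)"
| "departure_time P2 s = A_time (s - t2)"
| "departure_time B s = B_time s"
| "departure_time P4 s = B_time (s - t4)"
| "departure_time P5 s = B_time (s - t5)"

lemma A_time_closed:
  assumes "A_time s"
  shows "A_time (s + 2 * t1)" "A_time (s + 2 * t2)" "B_time (s + t3)"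
proof -
  obtain a b c d e where s: "s = round_trips (a, b, c, d, e)" "c = 0 \<longrightarrow> d = 0 \<and> e = 0"
    using assms unfolding A_time_def by blast
  show "A_time (s + 2 * t1)" "A_time (s + 2 * t2)"
    unfolding A_time_def s(1) round_trips_Suc(1,2)[symmetric] using s(2) by blast+
  show "B_time (s + t3)"
    unfolding B_time_def s(1) by (blast intro: add.commute)
qed

lemma B_time_closed:
  assumes "B_time s"
  shows "B_time (s + 2 * t4)" "B_time (s + 2 * t5)" "A_time (s + t3)"
proof -
  obtain a b c d e where s: "s = t3 + round_trips (a, b, c, d, e)"
    using assms unfolding B_time_def by blast
  show "B_time (s + 2 * t4)" "B_time (s + 2 * t5)"
    unfolding B_time_def s add.assoc round_trips_Suc(4,5)[symmetric] by blast+
  have "s + t3 = round_trips (a, b, Suc c, d, e)"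
    unfolding s round_trips_Suc by simp
  then show "A_time (s + t3)"
    unfolding A_time_def by blast
qed

lemma departs_departure_time: "dep X e s \<Longrightarrow> departure_time X s"
proof (induction rule: departs.induct)
  case (start e)
  have "A_time (round_trips (0, 0, 0, 0, 0))" unfolding A_time_def by blast
  then show ?case by (simp add: round_trips_def)
next
  case (step X e s e')
  then show ?case
    using departs_incident[OF step.hyps(1)] A_time_closed[of "s - t1"] A_time_closed[of "s - t2"] A_time_closed[of s]
      B_time_closed[of "s - t4"] B_time_closed[of "s - t5"] B_time_closed[of s]
    by (cases X; cases e; auto simp: incident_H_iff algebra_simps)
qed

lemma departs_A_round_trips_e123:
  assumes "incident H_ends A e"
  shows "dep A e (round_trips (a, b, c, 0, 0))"
proof -
  have "dep A e 0" using assms by (rule departs.start)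
  then have "dep A e (0 + 2 * real a * tm E1 + 2 * real b * tm E2 + 2 * real c * tm E3)"
    by (intro departs_round_trips) (auto simp: incident_H_iff)
  then show ?thesis by (simp add: round_trips_def)
qed

lemma departs_B_round_trips:
  assumes "incident H_ends B e"
  shows "dep B e (t3 + round_trips (a, b, c, d, f))"
proof -
  have "dep A E3 (round_trips (a, b, c, 0, 0))"
    by (rule departs_A_round_trips_e123) (simp add: incident_H_iff)
  then have "dep B e (round_trips (a, b, c, 0, 0) + tm E3)"
    by (rule departs_along[OF _ _ assms]) simp
  then have "dep B e (round_trips (a, b, c, 0, 0) + tm E3 + 2 * real d * tm E4 + 2 * real f * tm E5)"
    by (intro departs_round_trips) (auto simp: incident_H_iff)
  then show ?thesis by (simp add: round_trips_def algebra_simps)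
qed

lemma departs_A_round_trips:
  assumes "c = 0 \<longrightarrow> d = 0 \<and> f = 0" "incident H_ends A e"
  shows "dep A e (round_trips (a, b, c, d, f))"
proof (cases c)
  case 0
  then show ?thesis using assms departs_A_round_trips_e123 by auto
next
  case (Suc c')
  have "dep B E3 (t3 + round_trips (a, b, c', d, f))"
    by (rule departs_B_round_trips) (simp add: incident_H_iff)
  then have "dep A e (t3 + round_trips (a, b, c', d, f) + tm E3)"
    by (rule departs_along[OF _ _ assms(2)]) simp
  then show ?thesis using Suc by (simp add: round_trips_Suc algebra_simps)
qed

lemma departs_iff_departure_time: "dep X e s \<longleftrightarrow> incident H_ends X e \<and> departure_time X s"
proof
  assume "dep X e s"
  then show "incident H_ends X e \<and> departure_time X s"
    using departs_incident[OF \<open>dep X e s\<close>] departs_departure_time by blast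
next
  assume X: "incident H_ends X e \<and> departure_time X s"
  have at_A: "dep A e' s'" if "A_time s'" "incident H_ends A e'" for e' s'
    using that by (auto simp: A_time_def intro: departs_A_round_trips)
  have at_B: "dep B e' s'" if "B_time s'" "incident H_ends B e'" for e' s'
    using that by (auto simp: B_time_def intro: departs_B_round_trips)
  have leaf: "dep (other_end H_ends Z e') e' s" if "dep Z e' (s - tm e')" for Z e'
    using departs_along[OF that refl incident_other_end] by simp
  show "dep X e s"
    using X by (cases X) (auto simp: incident_H_iff intro: at_A at_B
      intro!: leaf[of A E1, simplified] leaf[of A E2, simplified] leaf[of B E4, simplified] leaf[of B E5, simplified])
qed

lemma arrives_at_A_iff:
  assumes "incident H_ends A e"
  shows "arrives H_ends tm A A e s \<longleftrightarrow> departure_time (other_end H_ends A e) (s - tm e)"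
  unfolding arrives_iff_departs_other_end[OF assms] departs_iff_departure_time
  by (simp add: incident_other_end)

lemma A_time_diff_2t1_iff:
  assumes "c = 0 \<longrightarrow> d = 0 \<and> e = 0"
  shows "A_time (round_trips (a, b, c, d, e) - 2 * t1) \<longleftrightarrow> a \<noteq> 0"
proof
  assume "A_time (round_trips (a, b, c, d, e) - 2 * t1)"
  then obtain a' b' c' d' e' where "round_trips (a, b, c, d, e) - 2 * t1 = round_trips (a', b', c', d', e')"
    unfolding A_time_def by blast
  then have "round_trips (a, b, c, d, e) = round_trips (Suc a', b', c', d', e')"
    by (simp add: round_trips_Suc)
  then show "a \<noteq> 0" by (simp add: inj_eq[OF inj_round_trips])
next
  assume "a \<noteq> 0"
  then obtain a' where "a = Suc a'" using not0_implies_Suc by blast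
  then have "round_trips (a, b, c, d, e) - 2 * t1 = round_trips (a', b, c, d, e)"
    by (simp add: round_trips_Suc)
  then show "A_time (round_trips (a, b, c, d, e) - 2 * t1)"
    using assms unfolding A_time_def by blast
qed

lemma A_time_diff_2t2_iff:
  assumes "c = 0 \<longrightarrow> d = 0 \<and> e = 0"
  shows "A_time (round_trips (a, b, c, d, e) - 2 * t2) \<longleftrightarrow> b \<noteq> 0"
proof
  assume "A_time (round_trips (a, b, c, d, e) - 2 * t2)"
  then obtain a' b' c' d' e' where "round_trips (a, b, c, d, e) - 2 * t2 = round_trips (a', b', c', d', e')"
    unfolding A_time_def by blast
  then have "round_trips (a, b, c, d, e) = round_trips (a', Suc b', c', d', e')"
    by (simp add: round_trips_Suc)
  then show "b \<noteq> 0" by (simp add: inj_eq[OF inj_round_trips])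
next
  assume "b \<noteq> 0"
  then obtain b' where "b = Suc b'" using not0_implies_Suc by blast
  then have "round_trips (a, b, c, d, e) - 2 * t2 = round_trips (a, b', c, d, e)"
    by (simp add: round_trips_Suc)
  then show "A_time (round_trips (a, b, c, d, e) - 2 * t2)"
    using assms unfolding A_time_def by blast
qed

lemma B_time_diff_t3_iff: "B_time (round_trips (a, b, c, d, e) - t3) \<longleftrightarrow> c \<noteq> 0"
proof
  assume "B_time (round_trips (a, b, c, d, e) - t3)"
  then obtain a' b' c' d' e' where "round_trips (a, b, c, d, e) - t3 = t3 + round_trips (a', b', c', d', e')"
    unfolding B_time_def by blast
  then have "round_trips (a, b, c, d, e) = round_trips (a', b', Suc c', d', e')"
    by (simp add: round_trips_Suc)
  then show "c \<noteq> 0" by (simp add: inj_eq[OF inj_round_trips])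
next
  assume "c \<noteq> 0"
  then obtain c' where "c = Suc c'" using not0_implies_Suc by blast
  then have "round_trips (a, b, c, d, e) - t3 = t3 + round_trips (a, b, c', d, e)"
    by (simp add: round_trips_Suc)
  then show "B_time (round_trips (a, b, c, d, e) - t3)"
    unfolding B_time_def by blast
qed

lemma born_at_A_round_trips:
  assumes "c = 0 \<longrightarrow> d = 0 \<and> e = 0"
  shows "born_at H_ends tm A A (round_trips (a, b, c, d, e)) = of_bool (a = 0) + of_bool (b = 0) + of_bool (c = 0)"
proof -
  have edges: "{f. incident H_ends A f} = {E1, E2, E3}" by (auto simp: incident_H_iff)
  let ?arr = "\<lambda>f. arrives H_ends tm A A f (round_trips (a, b, c, d, e))"
  have "?arr E1 \<longleftrightarrow> a \<noteq> 0" "?arr E2 \<longleftrightarrow> b \<noteq> 0" "?arr E3 \<longleftrightarrow> c \<noteq> 0"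
    using arrives_at_A_iff[of E1] arrives_at_A_iff[of E2] arrives_at_A_iff[of E3]
      A_time_diff_2t1_iff[OF assms] A_time_diff_2t2_iff[OF assms] B_time_diff_t3_iff
    by (simp_all add: incident_H_iff diff_diff_eq)
  then have arrivals: "{f. incident H_ends A f \<and> ?arr f} =
      {f. (f = E1 \<and> a \<noteq> 0) \<or> (f = E2 \<and> b \<noteq> 0) \<or> (f = E3 \<and> c \<noteq> 0)}"
    by (auto simp: incident_H_iff)
  show ?thesis unfolding born_at_def valence_def edges arrivals
    by (cases "a = 0"; cases "b = 0"; cases "c = 0"; simp add: Collect_disj_eq card_insert_if)
qed

definition departure_counts :: "real \<Rightarrow> (nat \<times> nat \<times> nat \<times> nat \<times> nat) set" where
  "departure_counts T = {(a, b, c, d, e). round_trips (a, b, c, d, e) \<le> T \<and> (c = 0 \<longrightarrow> d = 0 \<and> e = 0)}"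

lemma finite_round_trips_le: "finite {n. round_trips n \<le> T}"
proof (rule finite_subset)
  let ?N = "\<lambda>t. {..nat \<lceil>T / (2 * t)\<rceil>}"
  show "{n. round_trips n \<le> T} \<subseteq> ?N t1 \<times> ?N t2 \<times> ?N t3 \<times> ?N t4 \<times> ?N t5"
  proof
    fix n assume "n \<in> {n. round_trips n \<le> T}"
    moreover obtain a b c d e where n: "n = (a, b, c, d, e)" by (cases n)
    ultimately have le: "real a * (2 * t1) + real b * (2 * t2) + real c * (2 * t3) + real d * (2 * t4)
        + real e * (2 * t5) \<le> T"
      by (simp add: round_trips_def ac_simps)
    have "0 \<le> real a * (2 * t1)" "0 \<le> real b * (2 * t2)" "0 \<le> real c * (2 * t3)"
      "0 \<le> real d * (2 * t4)" "0 \<le> real e * (2 * t5)"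
      using pos by simp_all
    then have "real a * (2 * t1) \<le> T" "real b * (2 * t2) \<le> T" "real c * (2 * t3) \<le> T"
      "real d * (2 * t4) \<le> T" "real e * (2 * t5) \<le> T"
      using le by linarith+
    then show "n \<in> ?N t1 \<times> ?N t2 \<times> ?N t3 \<times> ?N t4 \<times> ?N t5"
      using pos by (simp add: n le_nat_ceiling_divide)
  qed
qed simp

lemma departure_times_at_A:
  "{s. s \<le> T \<and> (\<exists>e. dep A e s)} = round_trips ` departure_counts T"
proof (intro set_eqI iffI)
  fix s assume "s \<in> {s. s \<le> T \<and> (\<exists>e. dep A e s)}"
  then obtain e where "s \<le> T" "dep A e s" by blast
  then have "A_time s" using departs_departure_time[of A e s] by simp
  then obtain a b c d e' where "s = round_trips (a, b, c, d, e')" "c = 0 \<longrightarrow> d = 0 \<and> e' = 0"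
    unfolding A_time_def by blast
  with \<open>s \<le> T\<close> show "s \<in> round_trips ` departure_counts T"
    unfolding departure_counts_def by (auto intro: image_eqI)
next
  fix s assume "s \<in> round_trips ` departure_counts T"
  then obtain a b c d e where "s = round_trips (a, b, c, d, e)" "s \<le> T" "c = 0 \<longrightarrow> d = 0 \<and> e = 0"
    unfolding departure_counts_def by blast
  then show "s \<in> {s. s \<le> T \<and> (\<exists>e. dep A e s)}"
    using departs_A_round_trips[of c d e E1] by (auto simp: incident_H_iff)
qed

lemma Nborn_at_A_card:
  "Nborn H_ends tm A A T =
     card (departure_counts T \<inter> {(a, b, c, d, e). a = 0})
   + card (departure_counts T \<inter> {(a, b, c, d, e). b = 0})
   + card (departure_counts T \<inter> {(a, b, c, d, e). c = 0})"
proof -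
  have fin: "finite (departure_counts T)"
    by (rule finite_subset[OF _ finite_round_trips_le]) (auto simp: departure_counts_def)
  have born: "born_at H_ends tm A A (round_trips n) =
      of_bool (n \<in> {(a, b, c, d, e). a = 0}) + of_bool (n \<in> {(a, b, c, d, e). b = 0})
    + of_bool (n \<in> {(a, b, c, d, e). c = 0})" if "n \<in> departure_counts T" for n
    using that born_at_A_round_trips unfolding departure_counts_def by auto
  have "Nborn H_ends tm A A T = (\<Sum>n \<in> departure_counts T. born_at H_ends tm A A (round_trips n))"
    unfolding Nborn_def departure_times_at_A
    by (simp add: sum.reindex inj_on_subset[OF inj_round_trips])
  also have "\<dots> = (\<Sum>n \<in> departure_counts T. of_bool (n \<in> {(a, b, c, d, e). a = 0})
      + of_bool (n \<in> {(a, b, c, d, e). b = 0}) + of_bool (n \<in> {(a, b, c, d, e). c = 0}))"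
    by (rule sum.cong[OF refl born])
  also have "\<dots> = card (departure_counts T \<inter> {(a, b, c, d, e). a = 0})
   + card (departure_counts T \<inter> {(a, b, c, d, e). b = 0})
   + card (departure_counts T \<inter> {(a, b, c, d, e). c = 0})"
    using fin by (simp only: sum.distrib sum_of_bool_eq of_nat_id Collect_mem_eq)
  finally show ?thesis .
qed

lemma card_departure_counts_slices:
  "card (departure_counts T \<inter> {(a, b, c, d, e). a = 0}) = card {(m, c, d, e).
     2 * real m * t2 + 2 * real c * t3 + 2 * real d * t4 + 2 * real e * t5 \<le> T \<and> (c = 0 \<longrightarrow> d = 0 \<and> e = 0)}"
    (is "card ?Sa = card ?Pa")
  "card (departure_counts T \<inter> {(a, b, c, d, e). b = 0}) = card {(m, c, d, e).
     2 * real m * t1 + 2 * real c * t3 + 2 * real d * t4 + 2 * real e * t5 \<le> T \<and> (c = 0 \<longrightarrow> d = 0 \<and> e = 0)}"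
    (is "card ?Sb = card ?Pb")
  "card (departure_counts T \<inter> {(a, b, c, d, e). c = 0}) = card {(n1, n2).
     2 * real n1 * t1 + 2 * real n2 * t2 \<le> T}"
    (is "card ?Sc = card ?Pc")
proof -
  have "?Sa = (\<lambda>(b, c, d, e). (0, b, c, d, e)) ` ?Pa"
    by (auto simp: departure_counts_def round_trips_def image_iff)
  then show "card ?Sa = card ?Pa" by (simp add: card_image inj_on_def)
  have "?Sb = (\<lambda>(a, c, d, e). (a, 0, c, d, e)) ` ?Pb"
    by (auto simp: departure_counts_def round_trips_def image_iff)
  then show "card ?Sb = card ?Pb" by (simp add: card_image inj_on_def)
  have "?Sc = (\<lambda>(a, b). (a, b, 0, 0, 0)) ` ?Pc"
    by (auto simp: departure_counts_def round_trips_def image_iff)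
  then show "card ?Sc = card ?Pc" by (simp add: card_image inj_on_def)
qed

lemma finite_slices:
  "finite {(m, c, d, e). 2 * real m * t2 + 2 * real c * t3 + 2 * real d * t4 + 2 * real e * t5 \<le> T}"
    (is "finite ?P2")
  "finite {(m, c, d, e). 2 * real m * t1 + 2 * real c * t3 + 2 * real d * t4 + 2 * real e * t5 \<le> T}"
    (is "finite ?P1")
proof -
  have "?P2 = (\<lambda>(b, c, d, e). (0, b, c, d, e)) -` {n. round_trips n \<le> T}"
    by (auto simp: round_trips_def)
  also have "finite \<dots>"
    by (rule finite_vimageI[OF finite_round_trips_le]) (auto simp: inj_def)
  finally show "finite ?P2" .
  have "?P1 = (\<lambda>(a, c, d, e). (a, 0, c, d, e)) -` {n. round_trips n \<le> T}"
    by (auto simp: round_trips_def)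
  also have "finite \<dots>"
    by (rule finite_vimageI[OF finite_round_trips_le]) (auto simp: inj_def)
  finally show "finite ?P1" .
qed

lemma Nborn_at_A:
  "int (Nborn H_ends tm A A T) =
        int (card {(n1, n3, n4, n5).
               2 * real n1 * t1 + 2 * real n3 * t3 + 2 * real n4 * t4 + 2 * real n5 * t5 \<le> T})
      + int (card {(n2, n3, n4, n5).
               2 * real n2 * t2 + 2 * real n3 * t3 + 2 * real n4 * t4 + 2 * real n5 * t5 \<le> T})
      - int (card {(n1, n4, n5).
               2 * real n1 * t1 + 2 * real n4 * t4 + 2 * real n5 * t5 \<le> T})
      - int (card {(n2, n4, n5).
               2 * real n2 * t2 + 2 * real n4 * t4 + 2 * real n5 * t5 \<le> T})
      + int (card {(n1, n2). 2 * real n1 * t1 + 2 * real n2 * t2 \<le> T})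
      + int (card {n1. 2 * real n1 * t1 \<le> T})
      + int (card {n2. 2 * real n2 * t2 \<le> T})"
  unfolding Nborn_at_A_card card_departure_counts_slices of_nat_add
    card_admissible_counts[OF finite_slices(1)] card_admissible_counts[OF finite_slices(2)]
  by simp

end

theorem mainTheorem3:
  fixes t1 t2 t3 t4 t5 :: real
  assumes pos: "t1 > 0" "t2 > 0" "t3 > 0" "t4 > 0" "t5 > 0"
    and linindep: "\<And>q1 q2 q3 q4 q5 :: rat.
        of_rat q1 * t1 + of_rat q2 * t2 + of_rat q3 * t3 + of_rat q4 * t4 + of_rat q5 * t5 = 0 \<Longrightarrow>
        q1 = 0 \<and> q2 = 0 \<and> q3 = 0 \<and> q4 = 0 \<and> q5 = 0"
  shows "\<exists>C :: int. \<forall>T :: real. T \<ge> 0 \<longrightarrow>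
    int (Nborn H_ends (H_time t1 t2 t3 t4 t5) A A T) =
        int (card {(n1, n3, n4, n5).
               2 * real n1 * t1 + 2 * real n3 * t3 + 2 * real n4 * t4 + 2 * real n5 * t5 \<le> T})
      + int (card {(n2, n3, n4, n5).
               2 * real n2 * t2 + 2 * real n3 * t3 + 2 * real n4 * t4 + 2 * real n5 * t5 \<le> T})
      - int (card {(n1, n4, n5).
               2 * real n1 * t1 + 2 * real n4 * t4 + 2 * real n5 * t5 \<le> T})
      - int (card {(n2, n4, n5).
               2 * real n2 * t2 + 2 * real n4 * t4 + 2 * real n5 * t5 \<le> T})
      + int (card {(n1, n2). 2 * real n1 * t1 + 2 * real n2 * t2 \<le> T})
      + int (card {n1. 2 * real n1 * t1 \<le> T})
      + int (card {n2. 2 * real n2 * t2 \<le> T})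
      + C"
proof -
  interpret H_junction t1 t2 t3 t4 t5
    using pos linindep by unfold_locales auto
  show ?thesis by (intro exI[of _ 0] allI impI) (simp add: Nborn_at_A)
qed

end
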